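(* Let $p, q \in \mathbb{R}$ with $q \le p$. Then $$\frac{\mathscr{P}_p(v)}{\mathscr{P}_q(v)} \le \exp\bigg( \frac{p-q}{8} \Big(\ln\Big(\frac{\max v}{\min v}\Big)\Big)^2 \bigg)$$ for every $n \in \mathbb{N}$ and every $v \in \mathbb{R}_+^n$. Moreover, the constant $\frac{p-q}{8}$ is sharp: if $C \in \mathbb{R}$ is such that $\frac{\mathscr{P}_p(v)}{\mathscr{P}_q(v)} \le \exp\big( C (\ln(\max v/\min v))^2\big)$ holds for all $n\in\mathbb{N}$ and all $v \in \mathbb{R}_+^n$, then $C \ge \frac{p-q}{8}$.
   Context: For $v = (v_1,\dots,v_n) \in \mathbb{R}_+^n$ (vectors of positive reals), the power mean of order $p \in \mathbb{R}$ is $\mathscr{P}_p(v) = \big(\frac{v_1^p + \cdots + v_n^p}{n}\big)^{1/p}$ for $p \neq 0$ and $\mathscr{P}_0(v) = \sqrt[n]{v_1 \cdots v_n}$. Here $\max v$ and $\min v$ denote the largest and smallest entry of $v$. *)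

theory Defs
  imports "HOL-Analysis.Analysis"
begin

text \<open>Vectors in R_+^n are represented as functions v :: nat => real restricted
  to the index set {..<n}, with n >= 1.\<close>

definition power_mean :: "real \<Rightarrow> nat \<Rightarrow> (nat \<Rightarrow> real) \<Rightarrow> real" where
  "power_mean p n v =
     (if p = 0 then (\<Prod>i<n. v i) powr (1 / real n)
      else ((\<Sum>i<n. v i powr p) / real n) powr (1 / p))"

definition vmax :: "nat \<Rightarrow> (nat \<Rightarrow> real) \<Rightarrow> real" where
  "vmax n v = Max (v ` {..<n})"

definition vmin :: "nat \<Rightarrow> (nat \<Rightarrow> real) \<Rightarrow> real" where
  "vmin n v = Min (v ` {..<n})"

end

theory Submission
  imports Defs "HOL-Probability.Hoeffding" "HOL-Real_Asymp.Real_Asymp"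
begin

text \<open>
  Put \<open>x\<^sub>i = ln v\<^sub>i \<in> [a, b]\<close> and let \<open>\<phi>(t) = ln ((1/n) \<Sum>\<^sub>i exp (t x\<^sub>i))\<close> be the cumulant
  generating function of the uniform distribution on the \<open>x\<^sub>i\<close>, so that \<open>ln P\<^sub>t(v) = \<phi>(t) / t\<close>.
  Hoeffding's lemma gives \<open>\<phi>(t) \<le> t \<mu> + t\<^sup>2 (b - a)\<^sup>2 / 8\<close>, and applied to the exponentially
  tilted distribution it gives \<open>t \<phi>'(t) - \<phi>(t) \<le> t\<^sup>2 (b - a)\<^sup>2 / 8\<close>. The second bound says that
  \<open>\<phi>(t) / t - t (b - a)\<^sup>2 / 8\<close> has non-positive derivative away from \<open>0\<close>, and the first one lets
  it cross \<open>0\<close> through the value \<open>\<mu>\<close>; hence \<open>ln P\<^sub>p - ln P\<^sub>q \<le> (p - q) (b - a)\<^sup>2 / 8\<close>.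
  Sharpness is seen on \<open>v = (1, e\<^sup>s)\<close>, where \<open>ln P\<^sub>t(v) = s/2 + t s\<^sup>2/8 + o(s\<^sup>2)\<close> as \<open>s \<rightarrow> 0\<close>.
\<close>

lemma ln_le_iff_le_exp: "0 < (x::real) \<Longrightarrow> ln x \<le> y \<longleftrightarrow> x \<le> exp y"
  using ln_le_cancel_iff[OF _ exp_gt_zero, of x y] by simp

lemma Hoeffdings_lemma_weighted_pos:
  fixes w x :: "'a \<Rightarrow> real"
  assumes "finite I" and w_nonneg: "\<And>i. i \<in> I \<Longrightarrow> w i \<ge> 0" and w_sum: "(\<Sum>i\<in>I. w i) = 1"
    and x_bounds: "\<And>i. i \<in> I \<Longrightarrow> x i \<in> {a..b}" and "l > 0"
  shows "(\<Sum>i\<in>I. w i * exp (l * x i)) \<le> exp (l * (\<Sum>i\<in>I. w i * x i) + l\<^sup>2 * (b - a)\<^sup>2 / 8)"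
proof -
  define P where "P = embed_pmf (\<lambda>i. if i \<in> I then w i else 0)"
  have "(\<integral>\<^sup>+i. ennreal (if i \<in> I then w i else 0) \<partial>count_space UNIV) = 1"
    using \<open>finite I\<close> w_nonneg w_sum by (subst nn_integral_count_space'[of I]) (auto simp: sum_ennreal)
  then have pmf_P: "pmf P i = (if i \<in> I then w i else 0)" for i
    unfolding P_def using w_nonneg by (subst pmf_embed_pmf) auto
  have set_P: "set_pmf P \<subseteq> I"
    by (auto simp: set_pmf_eq pmf_P)
  define \<mu> where "\<mu> = (\<Sum>i\<in>I. w i * x i)"
  have "measure_pmf.expectation P x = (\<Sum>i\<in>I. x i * pmf P i)"
    using \<open>finite I\<close> set_P by (intro integral_measure_pmf_real) auto
  then have expectation: "measure_pmf.expectation P x = \<mu>"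
    by (simp add: \<mu>_def pmf_P mult.commute)
  interpret interval_bounded_random_variable "measure_pmf P" x a b
    using x_bounds set_P by unfold_locales (auto simp: AE_measure_pmf_iff)
  have "(\<integral>\<^sup>+i. exp (l * (x i - \<mu>)) \<partial>measure_pmf P) = (\<Sum>i\<in>I. exp (l * (x i - \<mu>)) * w i)"
    using \<open>finite I\<close> set_P w_nonneg
    by (subst nn_integral_measure_pmf_support[of I])
       (auto simp: pmf_P ennreal_mult[symmetric] sum_ennreal intro!: sum.cong)
  moreover have "(\<integral>\<^sup>+i. exp (l * (x i - \<mu>)) \<partial>measure_pmf P) \<le> exp (l\<^sup>2 * (b - a)\<^sup>2 / 8)"
    using Hoeffdings_lemma_nn_integral[OF \<open>l > 0\<close>] by (simp add: expectation)
  ultimately have "(\<Sum>i\<in>I. exp (l * (x i - \<mu>)) * w i) \<le> exp (l\<^sup>2 * (b - a)\<^sup>2 / 8)"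
    using w_nonneg by (simp add: ennreal_le_iff sum_nonneg)
  moreover have "(\<Sum>i\<in>I. exp (l * (x i - \<mu>)) * w i) = (\<Sum>i\<in>I. w i * exp (l * x i)) / exp (l * \<mu>)"
    by (simp add: sum_divide_distrib right_diff_distrib exp_diff mult.commute)
  ultimately show ?thesis
    by (simp add: \<mu>_def exp_add pos_divide_le_eq mult.commute)
qed

lemma Hoeffdings_lemma_weighted:
  fixes w x :: "'a \<Rightarrow> real"
  assumes "finite I" and w_nonneg: "\<And>i. i \<in> I \<Longrightarrow> w i \<ge> 0" and w_sum: "(\<Sum>i\<in>I. w i) = 1"
    and x_bounds: "\<And>i. i \<in> I \<Longrightarrow> x i \<in> {a..b}"
  shows "(\<Sum>i\<in>I. w i * exp (l * x i)) \<le> exp (l * (\<Sum>i\<in>I. w i * x i) + l\<^sup>2 * (b - a)\<^sup>2 / 8)"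
proof (cases l "0::real" rule: linorder_cases)
  case less
  then have "(\<Sum>i\<in>I. w i * exp (- l * - x i))
      \<le> exp (- l * (\<Sum>i\<in>I. w i * - x i) + (- l)\<^sup>2 * (- a - - b)\<^sup>2 / 8)"
    using x_bounds by (intro Hoeffdings_lemma_weighted_pos[OF \<open>finite I\<close> w_nonneg w_sum]) auto
  then show ?thesis
    by (simp add: sum_negf power2_commute)
next
  case equal
  then show ?thesis by (simp add: w_sum)
next
  case greater
  show ?thesis using Hoeffdings_lemma_weighted_pos[OF assms greater] .
qed

lemma quotient_minus_linear_antimono:
  fixes \<phi> \<phi>' :: "real \<Rightarrow> real"
  assumes deriv: "\<And>t. t \<noteq> 0 \<Longrightarrow> (\<phi> has_real_derivative \<phi>' t) (at t)"
    and tangent: "\<And>t. t * \<phi>' t - \<phi> t \<le> c * t\<^sup>2"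
    and chord: "\<And>t. \<phi> t \<le> \<mu> * t + c * t\<^sup>2"
    and "q \<le> p"
  shows "(if p = 0 then \<mu> else \<phi> p / p) - c * p \<le> (if q = 0 then \<mu> else \<phi> q / q) - c * q"
proof -
  define g where "g t = \<phi> t / t - c * t" for t
  have g_antimono: "g p' \<le> g q'" if "q' \<le> p'" "0 \<notin> {q'..p'}" for p' q'
  proof (rule DERIV_nonpos_imp_nonincreasing[of q' p' g])
    fix t assume "q' \<le> t" "t \<le> p'"
    with that have "t \<noteq> 0" by auto
    have "(g has_real_derivative (\<phi>' t * t - \<phi> t) / t\<^sup>2 - c) (at t)"
      unfolding g_def using deriv[OF \<open>t \<noteq> 0\<close>] \<open>t \<noteq> 0\<close>
      by (auto intro!: derivative_eq_intros simp: power2_eq_square)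
    moreover have "(\<phi>' t * t - \<phi> t) / t\<^sup>2 - c \<le> 0"
      using tangent[of t] \<open>t \<noteq> 0\<close> by (simp add: divide_le_eq mult.commute)
    ultimately show "\<exists>D. (g has_real_derivative D) (at t) \<and> D \<le> 0" by blast
  qed fact
  have g_le: "g t \<le> \<mu>" if "t > 0" for t
    using chord[of t] that by (simp add: g_def divide_le_eq power2_eq_square algebra_simps)
  have g_ge: "\<mu> \<le> g t" if "t < 0" for t
    using chord[of t] that by (simp add: g_def le_divide_eq power2_eq_square algebra_simps)
  consider "0 \<notin> {q..p}" | "q \<le> 0" "0 \<le> p" by fastforce
  then show ?thesis
  proof cases
    case 1
    with g_antimono[OF \<open>q \<le> p\<close>] \<open>q \<le> p\<close> show ?thesis by (auto simp: g_def)
  next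
    case 2
    then show ?thesis using g_le[of p] g_ge[of q] by (cases "p = 0"; cases "q = 0") (auto simp: g_def)
  qed
qed

definition log_mean_exp :: "nat \<Rightarrow> (nat \<Rightarrow> real) \<Rightarrow> real \<Rightarrow> real" where
  "log_mean_exp n x t = ln ((\<Sum>i<n. exp (t * x i)) / n)"

definition exp_mean :: "real \<Rightarrow> nat \<Rightarrow> (nat \<Rightarrow> real) \<Rightarrow> real" where
  "exp_mean t n x = (if t = 0 then (\<Sum>i<n. x i) / n else log_mean_exp n x t / t)"

lemma power_mean_eq_exp_exp_mean:
  assumes "n \<ge> 1" and v_pos: "\<And>i. i < n \<Longrightarrow> v i > 0"
  shows "power_mean t n v = exp (exp_mean t n (\<lambda>i. ln (v i)))"
proof -
  have v_nonzero: "\<forall>i\<in>{..<n}. v i \<noteq> 0"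
    using v_pos by (metis lessThan_iff less_irrefl)
  show ?thesis
  proof (cases "t = 0")
    case True
    have "ln (\<Prod>i<n. v i) = (\<Sum>i<n. ln (v i))"
      using v_nonzero by (intro ln_prod) auto
    with True v_nonzero show ?thesis
      by (simp add: power_mean_def exp_mean_def powr_def)
  next
    case False
    have "(\<Sum>i<n. v i powr t) = (\<Sum>i<n. exp (t * ln (v i)))"
      using v_nonzero by (intro sum.cong) (auto simp: powr_def mult.commute)
    moreover have "(\<Sum>i<n. exp (t * ln (v i))) > 0"
      using \<open>n \<ge> 1\<close> by (intro sum_pos) (auto simp: lessThan_empty_iff)
    ultimately show ?thesis
      using False \<open>n \<ge> 1\<close> by (simp add: power_mean_def exp_mean_def log_mean_exp_def powr_def)
  qed
qed

lemma log_mean_exp_le: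
  assumes "n \<ge> 1" and x_bounds: "\<And>i. i < n \<Longrightarrow> x i \<in> {a..b}"
  shows "log_mean_exp n x t \<le> (\<Sum>i<n. x i) / n * t + (b - a)\<^sup>2 / 8 * t\<^sup>2"
proof -
  have "(\<Sum>i<n. 1 / n * exp (t * x i)) \<le> exp (t * (\<Sum>i<n. 1 / n * x i) + t\<^sup>2 * (b - a)\<^sup>2 / 8)"
    using \<open>n \<ge> 1\<close> x_bounds by (intro Hoeffdings_lemma_weighted) auto
  then have "(\<Sum>i<n. exp (t * x i)) / n \<le> exp ((\<Sum>i<n. x i) / n * t + (b - a)\<^sup>2 / 8 * t\<^sup>2)"
    by (simp add: sum_divide_distrib[symmetric] mult.commute)
  moreover have "(\<Sum>i<n. exp (t * x i)) > 0"
    using \<open>n \<ge> 1\<close> by (intro sum_pos) (auto simp: lessThan_empty_iff)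
  ultimately show ?thesis
    unfolding log_mean_exp_def using \<open>n \<ge> 1\<close> by (simp add: ln_le_iff_le_exp)
qed

lemma log_mean_exp_has_real_derivative:
  assumes "n \<ge> 1"
  shows "(log_mean_exp n x has_real_derivative
           (\<Sum>i<n. x i * exp (t * x i)) / (\<Sum>i<n. exp (t * x i))) (at t)"
proof -
  have "(\<Sum>i<n. exp (t * x i)) > 0"
    using \<open>n \<ge> 1\<close> by (intro sum_pos) (auto simp: lessThan_empty_iff)
  then show ?thesis
    unfolding log_mean_exp_def using \<open>n \<ge> 1\<close>
    by (auto intro!: derivative_eq_intros simp: field_simps mult.commute)
qed

lemma log_mean_exp_tangent_le:
  assumes "n \<ge> 1" and x_bounds: "\<And>i. i < n \<Longrightarrow> x i \<in> {a..b}"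
  shows "t * ((\<Sum>i<n. x i * exp (t * x i)) / (\<Sum>i<n. exp (t * x i))) - log_mean_exp n x t
           \<le> (b - a)\<^sup>2 / 8 * t\<^sup>2"
proof -
  define S where "S = (\<Sum>i<n. exp (t * x i))"
  have "S > 0"
    unfolding S_def using \<open>n \<ge> 1\<close> by (intro sum_pos) (auto simp: lessThan_empty_iff)
  define w where "w i = exp (t * x i) / S" for i
  have "(\<Sum>i<n. w i * exp (- t * x i)) \<le> exp (- t * (\<Sum>i<n. w i * x i) + (- t)\<^sup>2 * (b - a)\<^sup>2 / 8)"
    using \<open>S > 0\<close> x_bounds
    by (intro Hoeffdings_lemma_weighted) (auto simp: w_def S_def simp flip: sum_divide_distrib)
  also have "(\<Sum>i<n. w i * exp (- t * x i)) = n / S"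
    by (simp add: w_def flip: exp_add)
  also have "(\<Sum>i<n. w i * x i) = (\<Sum>i<n. x i * exp (t * x i)) / S"
    by (simp add: w_def S_def sum_divide_distrib mult.commute)
  finally have "ln (n / S) \<le> - t * ((\<Sum>i<n. x i * exp (t * x i)) / S) + (b - a)\<^sup>2 / 8 * t\<^sup>2"
    using \<open>S > 0\<close> \<open>n \<ge> 1\<close> by (simp add: ln_le_iff_le_exp mult.commute)
  moreover have "ln (n / S) = - log_mean_exp n x t"
    using \<open>S > 0\<close> \<open>n \<ge> 1\<close> by (simp add: log_mean_exp_def S_def ln_div)
  ultimately show ?thesis
    by (simp add: S_def)
qed

lemma exp_mean_minus_linear_antimono:
  assumes "n \<ge> 1" and "\<And>i. i < n \<Longrightarrow> x i \<in> {a..b}" and "q \<le> p"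
  shows "exp_mean p n x - (b - a)\<^sup>2 / 8 * p \<le> exp_mean q n x - (b - a)\<^sup>2 / 8 * q"
  unfolding exp_mean_def
  using quotient_minus_linear_antimono[OF log_mean_exp_has_real_derivative
          log_mean_exp_tangent_le log_mean_exp_le \<open>q \<le> p\<close>] assms
  by blast

lemma power_mean_ratio_le:
  assumes "n \<ge> 1" and "0 < m" and v_bounds: "\<And>i. i < n \<Longrightarrow> v i \<in> {m..M}" and "q \<le> p"
  shows "power_mean p n v / power_mean q n v \<le> exp ((p - q) / 8 * (ln (M / m))\<^sup>2)"
proof -
  have v_pos: "v i > 0" if "i < n" for i
    using v_bounds[OF that] \<open>0 < m\<close> by auto
  have ln_v_bounds: "ln (v i) \<in> {ln m..ln M}" if "i < n" for i
    using v_bounds[OF that] \<open>0 < m\<close> by auto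
  have "exp_mean p n (\<lambda>i. ln (v i)) - exp_mean q n (\<lambda>i. ln (v i)) \<le> (p - q) / 8 * (ln M - ln m)\<^sup>2"
    using exp_mean_minus_linear_antimono[where x = "\<lambda>i. ln (v i)", OF \<open>n \<ge> 1\<close> ln_v_bounds \<open>q \<le> p\<close>]
    by (simp add: algebra_simps)
  moreover have "ln (M / m) = ln M - ln m"
    using v_bounds[of 0] \<open>n \<ge> 1\<close> \<open>0 < m\<close> by (simp add: ln_div)
  ultimately show ?thesis
    using power_mean_eq_exp_exp_mean[OF \<open>n \<ge> 1\<close> v_pos] by (simp add: exp_diff[symmetric])
qed

lemma vmin_vmax_bounds: "i < n \<Longrightarrow> v i \<in> {vmin n v..vmax n v}"
  unfolding vmin_def vmax_def by (auto intro: Min_le Max_ge)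

lemma vmin_pos:
  assumes "n \<ge> 1" and "\<And>i. i < n \<Longrightarrow> v i > 0"
  shows "vmin n v > 0"
proof -
  have "{..<n} \<noteq> {}"
    using \<open>n \<ge> 1\<close> by (auto simp: lessThan_empty_iff)
  then have "vmin n v \<in> v ` {..<n}"
    unfolding vmin_def by (intro Min_in) auto
  then show ?thesis
    using assms(2) by auto
qed

lemma ln_power_mean_two_point:
  "ln (power_mean t 2 (\<lambda>i. if i = 0 then 1 else exp s))
     = (if t = 0 then s / 2 else ln ((1 + exp (t * s)) / 2) / t)"
  by (subst power_mean_eq_exp_exp_mean)
     (auto simp: exp_mean_def log_mean_exp_def numeral_2_eq_2 lessThan_Suc add.commute)

lemma vmin_vmax_two_point:
  assumes "s \<ge> 0"
  shows "vmin 2 (\<lambda>i. if i = 0 then 1 else exp s) = 1"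
    and "vmax 2 (\<lambda>i. if i = 0 then 1 else exp s) = exp s"
proof -
  have "{..<2::nat} = {0, 1}"
    by auto
  then have "(\<lambda>i::nat. if i = 0 then 1 else exp s) ` {..<2} = {1, exp s}"
    by (simp add: insert_commute)
  with assms show "vmin 2 (\<lambda>i. if i = 0 then 1 else exp s) = 1"
    and "vmax 2 (\<lambda>i. if i = 0 then 1 else exp s) = exp s"
    by (simp_all add: vmin_def vmax_def)
qed

lemma ln_mean_exp_pair_asymp:
  "(t::real) \<noteq> 0 \<Longrightarrow> ((\<lambda>s. (ln ((1 + exp (t * s)) / 2) - t * s / 2) / (t * s\<^sup>2)) \<longlongrightarrow> t / 8) (at 0)"
  by real_asymp

lemma ln_power_mean_two_point_asymp:
  "((\<lambda>s. (ln (power_mean t 2 (\<lambda>i. if i = 0 then 1 else exp s)) - s / 2) / s\<^sup>2) \<longlongrightarrow> t / 8) (at 0)"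
proof (cases "t = 0")
  case True
  then show ?thesis by (simp add: ln_power_mean_two_point)
next
  case False
  then have "((\<lambda>s. (ln ((1 + exp (t * s)) / 2) - t * s / 2) / (t * s\<^sup>2)) \<longlongrightarrow> t / 8) (at 0)"
    by (rule ln_mean_exp_pair_asymp)
  moreover have "\<forall>\<^sub>F s in at 0. (ln ((1 + exp (t * s)) / 2) - t * s / 2) / (t * s\<^sup>2)
      = (ln (power_mean t 2 (\<lambda>i. if i = 0 then 1 else exp s)) - s / 2) / s\<^sup>2"
    using False by (auto simp: eventually_at_filter ln_power_mean_two_point diff_divide_distrib)
  ultimately show ?thesis
    by (rule Lim_transform_eventually)
qed

lemma power_mean_ratio_two_point_constant_ge:
  assumes bound: "\<And>s. s > 0 \<Longrightarrow>
    power_mean p 2 (\<lambda>i. if i = 0 then 1 else exp s) / power_mean q 2 (\<lambda>i. if i = 0 then 1 else exp s)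
      \<le> exp (C * s\<^sup>2)"
  shows "(p - q) / 8 \<le> C"
proof -
  define L where "L t s = ln (power_mean t 2 (\<lambda>i. if i = 0 then 1 else exp s))" for t s
  have "((\<lambda>s. (L t s - s / 2) / s\<^sup>2) \<longlongrightarrow> t / 8) (at_right 0)" for t
    using ln_power_mean_two_point_asymp[of t] unfolding L_def filterlim_at_split by blast
  then have "((\<lambda>s. (L p s - s / 2) / s\<^sup>2 - (L q s - s / 2) / s\<^sup>2) \<longlongrightarrow> p / 8 - q / 8) (at_right 0)"
    by (intro tendsto_diff)
  moreover have "\<forall>\<^sub>F s in at_right 0. (L p s - s / 2) / s\<^sup>2 - (L q s - s / 2) / s\<^sup>2 \<le> C"
    using eventually_at_right_less
  proof (rule eventually_mono)
    fix s :: real assume "s > 0"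
    have pos: "power_mean t 2 (\<lambda>i. if i = 0 then 1 else exp s) > 0" for t
      by (subst power_mean_eq_exp_exp_mean) auto
    have "L p s - L q s = ln (power_mean p 2 (\<lambda>i. if i = 0 then 1 else exp s)
                                / power_mean q 2 (\<lambda>i. if i = 0 then 1 else exp s))"
      using pos[of p] pos[of q] by (simp add: L_def ln_div)
    also have "\<dots> \<le> C * s\<^sup>2"
      using pos bound[OF \<open>s > 0\<close>] by (simp add: ln_le_iff_le_exp)
    finally have "L p s - L q s \<le> C * s\<^sup>2" .
    then show "(L p s - s / 2) / s\<^sup>2 - (L q s - s / 2) / s\<^sup>2 \<le> C"
      using \<open>s > 0\<close> by (simp add: diff_divide_distrib[symmetric] divide_le_eq)
  qed
  ultimately have "p / 8 - q / 8 \<le> C"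
    by (rule tendsto_le[OF trivial_limit_at_right_real tendsto_const])
  then show ?thesis
    by simp
qed

theorem mainTheorem4:
  fixes p q :: real
  assumes "q \<le> p"
  shows "(\<forall>n::nat. \<forall>v::nat \<Rightarrow> real. n \<ge> 1 \<longrightarrow> (\<forall>i<n. v i > 0) \<longrightarrow>
            power_mean p n v / power_mean q n v
              \<le> exp ((p - q) / 8 * (ln (vmax n v / vmin n v))^2))
       \<and> (\<forall>C::real. (\<forall>n::nat. \<forall>v::nat \<Rightarrow> real. n \<ge> 1 \<longrightarrow> (\<forall>i<n. v i > 0) \<longrightarrow>
            power_mean p n v / power_mean q n v
              \<le> exp (C * (ln (vmax n v / vmin n v))^2))
          \<longrightarrow> C \<ge> (p - q) / 8)"
proof (intro conjI allI impI)
  fix n :: nat and v :: "nat \<Rightarrow> real"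
  assume "n \<ge> 1" and "\<forall>i<n. v i > 0"
  then show "power_mean p n v / power_mean q n v \<le> exp ((p - q) / 8 * (ln (vmax n v / vmin n v))\<^sup>2)"
    by (intro power_mean_ratio_le vmin_pos vmin_vmax_bounds \<open>q \<le> p\<close>) auto
next
  fix C :: real
  assume bound: "\<forall>n v. n \<ge> 1 \<longrightarrow> (\<forall>i<n. v i > 0) \<longrightarrow>
    power_mean p n v / power_mean q n v \<le> exp (C * (ln (vmax n v / vmin n v))\<^sup>2)"
  show "C \<ge> (p - q) / 8"
  proof (rule power_mean_ratio_two_point_constant_ge)
    fix s :: real
    assume "s > 0"
    then show "power_mean p 2 (\<lambda>i. if i = 0 then 1 else exp s)
        / power_mean q 2 (\<lambda>i. if i = 0 then 1 else exp s) \<le> exp (C * s\<^sup>2)"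
      using bound[rule_format, of 2 "\<lambda>i. if i = 0 then 1 else exp s"] vmin_vmax_two_point[of s]
      by simp
  qed
qed

end
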